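(* Let $M\in\mathbb R^{n\times n}$ be sufficient, $Q\in\mathbb R^{n\times d}$, $q\in\mathbb R^n$ and $S=\{q+Q\theta:\theta\in\mathbb R^d\}$. Then $S_f=S\cap K(M)$ is a convex polyhedron.
   Context: The complementary range $K(M)$ is the set of $q'\in\mathbb R^n$ for which there exist $w,z\in\mathbb R^n$ with $w-Mz=q'$, $w,z\ge0$, $w^Tz=0$. $M$ is column sufficient if $[z_i(Mz)_i\le 0\ \forall i]\Rightarrow[z_i(Mz)_i=0\ \forall i]$; row sufficient if $M^T$ is column sufficient; sufficient if both. *)

theory Defs
  imports "HOL-Analysis.Analysis"
begin

definition compl_range :: "real^'n^'n \<Rightarrow> (real^'n) set" where
  "compl_range M = {q'. \<exists>w z. w - M *v z = q' \<and> (\<forall>i. w $ i \<ge> 0) \<and> (\<forall>i. z $ i \<ge> 0)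
                          \<and> w \<bullet> z = 0}"

definition column_sufficient :: "real^'n^'n \<Rightarrow> bool" where
  "column_sufficient M \<longleftrightarrow>
     (\<forall>z. (\<forall>i. z $ i * (M *v z) $ i \<le> 0) \<longrightarrow> (\<forall>i. z $ i * (M *v z) $ i = 0))"

definition row_sufficient :: "real^'n^'n \<Rightarrow> bool" where
  "row_sufficient M \<longleftrightarrow> column_sufficient (transpose M)"

definition sufficient :: "real^'n^'n \<Rightarrow> bool" where
  "sufficient M \<longleftrightarrow> column_sufficient M \<and> row_sufficient M"

end

theory Submission
  imports Defs
begin

(* For row sufficient M, an LCP  w - M z = p, w, z >= 0, w.z = 0  is solvable as
   soon as it is feasible, so the complementary range K(M) is exactly the feasibility cone
   {w - M z | w, z >= 0}, a finitely generated cone and hence a polyhedron.  Intersecting it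
   with the affine set {q + Q theta} gives a polyhedron, in particular a convex set.

   Feasibility implies solvability via the quadratic program  min z.(p + M z)  over the
   feasible set P.  The file first shows that this objective (the complementarity gap) has a
   local minimiser in the interior of some ball: otherwise the minimum-norm minimisers on
   larger and larger balls escape to infinity along a recession direction d, and stepping back
   along d contradicts the minimality of their norm.  Second, at such a local minimiser the
   first-order conditions together with Farkas' lemma express the gradient as a nonnegative
   combination of active constraint normals, and row sufficiency forces complementarity. *)

section \<open>The complementarity gap on the feasible set\<close>

definition lcp_feasible :: "real^'n^'n \<Rightarrow> real^'n \<Rightarrow> (real^'n) set" where
  "lcp_feasible M q = {z. \<forall>i. 0 \<le> z$i \<and> 0 \<le> (q + M *v z)$i}"

text \<open>The complementarity gap \<open>z \<bullet> (q + M z)\<close>, nonnegative on the feasible set and zero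
  exactly at solutions.\<close>
definition lcp_gap :: "real^'n^'n \<Rightarrow> real^'n \<Rightarrow> real^'n \<Rightarrow> real" where
  "lcp_gap M q z = z \<bullet> (q + M *v z)"

definition lcp_gap_grad :: "real^'n^'n \<Rightarrow> real^'n \<Rightarrow> real^'n \<Rightarrow> real^'n" where
  "lcp_gap_grad M q x = q + M *v x + transpose M *v x"

lemma inner_matrix_vector_transpose: "x \<bullet> (A *v y) = (transpose A *v x) \<bullet> (y::real^'m)"
  for A :: "real^'m^'n"
  by (metis dot_lmul_matrix transpose_transpose vector_transpose_matrix)

lemma lcp_gap_along_line:
  "lcp_gap M q (x + t *\<^sub>R d) =
     lcp_gap M q x + t * (lcp_gap_grad M q x \<bullet> d) + t\<^sup>2 * (d \<bullet> (M *v d))"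
  unfolding lcp_gap_def lcp_gap_grad_def
  by (simp add: matrix_vector_right_distrib matrix_vector_mult_scaleR inner_add_left inner_add_right
       inner_matrix_vector_transpose power2_eq_square algebra_simps inner_commute)

lemma lcp_gap_nonneg: "z \<in> lcp_feasible M q \<Longrightarrow> 0 \<le> lcp_gap M q z"
  unfolding lcp_gap_def lcp_feasible_def inner_vec_def by (auto intro!: sum_nonneg)

lemma continuous_on_lcp_gap: "continuous_on S (lcp_gap M q)"
  unfolding lcp_gap_def
  by (intro continuous_intros linear_continuous_on linear_linear[THEN iffD1] matrix_vector_mul_linear)

lemma closed_lcp_feasible:
  fixes M :: "real^'n^'n"
  shows "closed (lcp_feasible M q)"
proof -
  have "lcp_feasible M q = (\<Inter>i. {z. 0 \<le> z$i} \<inter> {z. 0 \<le> (q + M *v z)$i})"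
    unfolding lcp_feasible_def by auto
  moreover have "closed {z. 0 \<le> (q + M *v z)$i}" for i
    by (intro closed_Collect_le continuous_intros linear_continuous_on
          linear_linear[THEN iffD1] matrix_vector_mul_linear)
  moreover have "closed {z::real^'n. 0 \<le> z$i}" for i
    by (intro closed_Collect_le continuous_intros)
  ultimately show ?thesis by (metis (no_types, lifting) closed_INT closed_Int)
qed

lemma lcp_feasible_line:
  "x + t *\<^sub>R d \<in> lcp_feasible M q \<longleftrightarrow>
     (\<forall>i. 0 \<le> x$i + t * d$i \<and> 0 \<le> (q + M *v x)$i + t * (M *v d)$i)"
proof -
  have "(x + t *\<^sub>R d)$i = x$i + t * d$i" for i
    by simp
  moreover have "(q + M *v (x + t *\<^sub>R d))$i = (q + M *v x)$i + t * (M *v d)$i" for i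
    by (simp add: matrix_vector_right_distrib matrix_vector_mult_scaleR)
  ultimately show ?thesis unfolding lcp_feasible_def by (simp del: vector_add_component)
qed

text \<open>If \<open>d \<ge> 0\<close>, \<open>M d \<ge> 0\<close> and \<open>d \<bullet> M d \<le> 0\<close>, the gap cannot decrease in direction \<open>d\<close>
  from any feasible point: otherwise it would become negative far out on the feasible ray.\<close>
lemma recession_direction_grad_nonneg:
  assumes x: "x \<in> lcp_feasible M q" and d: "\<forall>i. 0 \<le> d$i" "\<forall>i. 0 \<le> (M *v d)$i"
    and dMd: "d \<bullet> (M *v d) \<le> 0"
  shows "0 \<le> lcp_gap_grad M q x \<bullet> d"
proof (rule ccontr)
  define g where "g = lcp_gap_grad M q x \<bullet> d"
  assume "\<not> 0 \<le> lcp_gap_grad M q x \<bullet> d"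
  then have g0: "g < 0" unfolding g_def by simp
  define t where "t = lcp_gap M q x / (- g) + 1"
  have t0: "0 \<le> t" unfolding t_def using lcp_gap_nonneg[OF x] g0 by (simp add: divide_nonneg_pos)
  have "x + t *\<^sub>R d \<in> lcp_feasible M q"
    using x d t0 unfolding lcp_feasible_line by (simp add: lcp_feasible_def add_nonneg_nonneg)
  then have "0 \<le> lcp_gap M q (x + t *\<^sub>R d)" by (rule lcp_gap_nonneg)
  also have "\<dots> = lcp_gap M q x + t * g + t\<^sup>2 * (d \<bullet> (M *v d))"
    unfolding lcp_gap_along_line g_def ..
  also have "\<dots> \<le> lcp_gap M q x + t * g" using dMd by (simp add: mult_nonneg_nonpos)
  also have "\<dots> = g" unfolding t_def using g0 by (simp add: field_simps)
  finally show False using g0 by simp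
qed

lemma lcp_gap_step_back:
  assumes "x \<in> lcp_feasible M q" "\<forall>i. 0 \<le> d$i" "\<forall>i. 0 \<le> (M *v d)$i" "d \<bullet> (M *v d) \<le> 0"
  shows "lcp_gap M q (x - d) \<le> lcp_gap M q x"
proof -
  have "lcp_gap M q (x - d) = lcp_gap M q x - lcp_gap_grad M q x \<bullet> d + d \<bullet> (M *v d)"
    using lcp_gap_along_line[of M q x "-1" d] by simp
  then show ?thesis using recession_direction_grad_nonneg[OF assms] assms(4) by simp
qed

section \<open>Existence of an interior local minimiser of the gap\<close>

lemma min_norm_minimizer_in_cball:
  fixes f :: "'a::euclidean_space \<Rightarrow> real"
  assumes P: "closed P" and f: "continuous_on UNIV f" and z0: "z0 \<in> P" "norm z0 \<le> r"
  obtains x where "x \<in> P" "norm x \<le> r" "\<forall>y\<in>P. norm y \<le> r \<longrightarrow> f x \<le> f y"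
    "\<forall>y\<in>P. norm y \<le> r \<and> f y \<le> f x \<longrightarrow> norm x \<le> norm y"
proof -
  define K where "K = P \<inter> cball 0 r"
  have cK: "compact K" unfolding K_def by (intro closed_Int_compact P compact_cball)
  have "z0 \<in> K" using z0 unfolding K_def by simp
  then obtain x0 where x0: "x0 \<in> K" "\<forall>y\<in>K. f x0 \<le> f y"
    using continuous_attains_inf[OF cK _ continuous_on_subset[OF f]] by blast
  define L where "L = K \<inter> {x. f x \<le> f x0}"
  have cL: "compact L" unfolding L_def
    by (intro compact_Int_closed cK closed_Collect_le f continuous_on_const)
  obtain x where x: "x \<in> L" "\<forall>y\<in>L. norm x \<le> norm y"
    using continuous_attains_inf[OF cL _ continuous_on_norm_id] x0 unfolding L_def by blast
  show ?thesis
    by (rule that) (use x x0 in \<open>force simp: L_def K_def\<close>)+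
qed

lemma eventually_componentwise_le:
  fixes V :: "nat \<Rightarrow> real^'n"
  assumes V: "\<And>j. \<forall>i. 0 \<le> V j $ i" and kpos: "\<And>j. 0 < k j"
    and k: "filterlim k at_top sequentially"
    and lim: "(\<lambda>j. (1 / k j) *\<^sub>R V j) \<longlonglongrightarrow> a" and a: "\<forall>i. 0 \<le> a$i"
  shows "eventually (\<lambda>j. \<forall>i. a$i \<le> V j $ i) sequentially"
proof (rule eventually_all_finite)
  fix i
  show "eventually (\<lambda>j. a$i \<le> V j $ i) sequentially"
  proof (cases "a$i = 0")
    case True
    then show ?thesis using V by simp
  next
    case False
    then have "a$i / 2 < a$i" using a[rule_format, of i] by linarith
    then have "eventually (\<lambda>j. a$i / 2 < ((1 / k j) *\<^sub>R V j) $ i) sequentially"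
      by (rule order_tendstoD(1)[OF tendsto_vec_nth[OF lim]])
    moreover have "eventually (\<lambda>j. 2 \<le> k j) sequentially"
      using k by (simp add: filterlim_at_top)
    ultimately show ?thesis
    proof eventually_elim
      case (elim j)
      then have "a$i < 2 * (V j $ i / k j)" by (simp add: mult.commute)
      also have "\<dots> \<le> V j $ i"
        using elim(2) kpos[of j] V[of j] by (simp add: field_simps mult_right_mono)
      finally show ?case by simp
    qed
  qed
qed

lemma scaled_residual_tendsto:
  fixes M :: "real^'n^'n"
  assumes k: "filterlim k at_top sequentially" and D: "(\<lambda>j. (1 / k j) *\<^sub>R Y j) \<longlonglongrightarrow> d"
  shows "(\<lambda>j. (1 / k j) *\<^sub>R (q + M *v Y j)) \<longlonglongrightarrow> M *v d"
proof -
  have k0: "(\<lambda>j. 1 / k j) \<longlonglongrightarrow> 0"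
    using tendsto_inverse_0_at_top[OF k] by (simp add: divide_inverse)
  have "(\<lambda>j. (1 / k j) *\<^sub>R q + M *v ((1 / k j) *\<^sub>R Y j)) \<longlonglongrightarrow> 0 *\<^sub>R q + M *v d"
    by (intro tendsto_intros k0 bounded_linear.tendsto[OF _ D])
       (simp add: linear_conv_bounded_linear)
  then show ?thesis by (simp add: matrix_vector_mult_scaleR scaleR_add_right)
qed

lemma asymptotic_direction:
  fixes M :: "real^'n^'n"
  assumes Y: "\<And>j. Y j \<in> lcp_feasible M q" and nY: "\<And>j. norm (Y j) = k j"
    and kpos: "\<And>j. 0 < k j" and k: "filterlim k at_top sequentially"
    and bound: "\<And>j. lcp_gap M q (Y j) \<le> C"
  obtains d r where "strict_mono r" "(\<lambda>j. (1 / k (r j)) *\<^sub>R Y (r j)) \<longlonglongrightarrow> d" "norm d = 1"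
    "\<forall>i. 0 \<le> d$i" "\<forall>i. 0 \<le> (M *v d)$i" "d \<bullet> (M *v d) \<le> 0"
proof -
  define D where "D j = (1 / k j) *\<^sub>R Y j" for j
  define E where "E j = (1 / k j) *\<^sub>R (q + M *v Y j)" for j
  have nD: "norm (D j) = 1" for j unfolding D_def using nY[of j] kpos[of j] by simp
  then have "bounded (range D)" by (auto simp: bounded_iff)
  then obtain d r where r: "strict_mono r" and "(D \<circ> r) \<longlonglongrightarrow> d"
    using bounded_imp_convergent_subsequence by blast
  then have Dr: "(\<lambda>j. D (r j)) \<longlonglongrightarrow> d" by (simp add: comp_def)
  have kr: "filterlim (\<lambda>j. k (r j)) at_top sequentially"
    using filterlim_compose[OF k filterlim_subseq[OF r]] .
  have Er: "(\<lambda>j. E (r j)) \<longlonglongrightarrow> M *v d"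
    unfolding E_def by (rule scaled_residual_tendsto[OF kr Dr[unfolded D_def]])
  have D0: "0 \<le> D j $ i" and E0: "0 \<le> E j $ i" for i j
    using Y[of j] kpos[of j] unfolding D_def E_def lcp_feasible_def by auto
  have "0 \<le> d$i" for i
    by (rule LIMSEQ_le_const[OF tendsto_vec_nth[OF Dr]]) (use D0 in auto)
  moreover have "0 \<le> (M *v d)$i" for i
    by (rule LIMSEQ_le_const[OF tendsto_vec_nth[OF Er]]) (use E0 in auto)
  moreover have "norm d = 1"
    using tendsto_norm[OF Dr] nD by (simp add: LIMSEQ_const_iff)
  moreover have "d \<bullet> (M *v d) \<le> 0"
  proof -
    have gap: "D j \<bullet> E j = lcp_gap M q (Y j) * (1 / k j)\<^sup>2" for j
      unfolding lcp_gap_def D_def E_def by (simp add: power2_eq_square)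
    have "(\<lambda>j. C * (1 / k (r j))\<^sup>2) \<longlonglongrightarrow> C * 0\<^sup>2"
      using tendsto_inverse_0_at_top[OF kr] by (intro tendsto_intros) (simp add: divide_inverse)
    moreover have "D (r j) \<bullet> E (r j) \<le> C * (1 / k (r j))\<^sup>2" for j
      unfolding gap using bound by (intro mult_right_mono) auto
    ultimately show ?thesis
      using LIMSEQ_le[OF tendsto_inner[OF Dr Er]] by simp
  qed
  ultimately show ?thesis using that r Dr unfolding D_def by blast
qed

lemma norm_diff_less:
  fixes y d :: "'a::real_inner"
  assumes "norm d = 1" and "1 < 2 * (y \<bullet> d)"
  shows "norm (y - d) < norm y"
proof -
  have "d \<bullet> d = 1" using assms(1) by (simp add: power2_norm_eq_inner[symmetric])
  then have "(norm (y - d))\<^sup>2 < (norm y)\<^sup>2"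
    using assms(2) by (simp add: power2_norm_eq_inner inner_diff inner_commute)
  then show ?thesis by (rule power_less_imp_less_base) simp
qed

lemma eventually_shift_back:
  fixes M :: "real^'n^'n"
  assumes Y: "\<And>j. Y j \<in> lcp_feasible M q" and kpos: "\<And>j. 0 < k j"
    and k: "filterlim k at_top sequentially" and D: "(\<lambda>j. (1 / k j) *\<^sub>R Y j) \<longlonglongrightarrow> d"
    and nd: "norm d = 1" and d: "\<forall>i. 0 \<le> d$i" "\<forall>i. 0 \<le> (M *v d)$i"
  shows "eventually (\<lambda>j. Y j - d \<in> lcp_feasible M q \<and> norm (Y j - d) < norm (Y j)) sequentially"
proof -
  have "eventually (\<lambda>j. \<forall>i. d$i \<le> Y j $ i) sequentially"
    using Y by (intro eventually_componentwise_le[OF _ kpos k D d(1)]) (simp add: lcp_feasible_def)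
  moreover have "eventually (\<lambda>j. \<forall>i. (M *v d)$i \<le> (q + M *v Y j) $ i) sequentially"
    using Y by (intro eventually_componentwise_le[OF _ kpos k scaled_residual_tendsto[OF k D] d(2)])
      (simp add: lcp_feasible_def)
  moreover have "d \<bullet> d = 1" using nd by (simp add: power2_norm_eq_inner[symmetric])
  then have "eventually (\<lambda>j. 1/2 < ((1 / k j) *\<^sub>R Y j) \<bullet> d) sequentially"
    using order_tendstoD(1)[OF tendsto_inner[OF D tendsto_const], of "1/2"] by simp
  moreover have "eventually (\<lambda>j. 1 \<le> k j) sequentially"
    using k by (simp add: filterlim_at_top)
  ultimately show ?thesis
  proof eventually_elim
    case (elim j)
    have "Y j - d \<in> lcp_feasible M q"
      using elim(1,2) unfolding lcp_feasible_def
      by (simp add: matrix_vector_mult_diff_distrib add_diff_eq)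
    moreover have "1 < 2 * (Y j \<bullet> d)"
    proof -
      define s where "s = ((1 / k j) *\<^sub>R Y j) \<bullet> d"
      have "Y j \<bullet> d = k j * s" unfolding s_def using kpos[of j] by simp
      moreover have "1/2 < s" using elim(3) unfolding s_def .
      moreover have "s \<le> k j * s"
        using mult_right_mono[OF elim(4), of s] \<open>1/2 < s\<close> by simp
      ultimately show ?thesis by linarith
    qed
    ultimately show ?case using norm_diff_less[OF nd] by blast
  qed
qed

text \<open>Otherwise the minimum-norm minimisers \<open>Y j\<close> on the balls of radius
  \<open>k j \<rightarrow> \<infinity>\<close> lie on the spheres; stepping back along their asymptotic direction gives a
  competitor with no larger gap and smaller norm.\<close>
lemma lcp_gap_interior_local_min:
  fixes M :: "real^'n^'n"
  assumes z0: "z0 \<in> lcp_feasible M q"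
  obtains R x where "x \<in> lcp_feasible M q" "norm x < R"
    "\<forall>y\<in>lcp_feasible M q. norm y \<le> R \<longrightarrow> lcp_gap M q x \<le> lcp_gap M q y"
proof (rule ccontr)
  let ?P = "lcp_feasible M q" and ?f = "lcp_gap M q"
  assume no_local_min: "\<not> thesis"
  define k where "k j = 1 + norm z0 + real j" for j
  have kpos: "0 < k j" for j unfolding k_def by (simp add: add_pos_nonneg)
  have k: "filterlim k at_top sequentially"
    unfolding k_def by (intro filterlim_tendsto_add_at_top[OF tendsto_const] filterlim_real_sequentially)
  have "\<exists>x. x \<in> ?P \<and> norm x \<le> k j \<and> (\<forall>y\<in>?P. norm y \<le> k j \<longrightarrow> ?f x \<le> ?f y)
      \<and> (\<forall>y\<in>?P. norm y \<le> k j \<and> ?f y \<le> ?f x \<longrightarrow> norm x \<le> norm y)" for j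
  proof -
    have "norm z0 \<le> k j" by (simp add: k_def)
    from min_norm_minimizer_in_cball[OF closed_lcp_feasible continuous_on_lcp_gap z0 this]
    show ?thesis by blast
  qed
  then obtain Y where Y: "\<And>j. Y j \<in> ?P" "\<And>j. norm (Y j) \<le> k j"
      and Ymin: "\<And>j. \<forall>y\<in>?P. norm y \<le> k j \<longrightarrow> ?f (Y j) \<le> ?f y"
      and Ynorm: "\<And>j. \<forall>y\<in>?P. norm y \<le> k j \<and> ?f y \<le> ?f (Y j) \<longrightarrow> norm (Y j) \<le> norm y"
    by metis
  have nY: "norm (Y j) = k j" for j
  proof (rule ccontr)
    assume "norm (Y j) \<noteq> k j"
    then have "norm (Y j) < k j" using Y(2)[of j] by simp
    then show False using no_local_min that[OF Y(1) _ Ymin] by blast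
  qed
  have bound: "?f (Y j) \<le> ?f z0" for j
    using Ymin[of j] z0 unfolding k_def by simp
  obtain d r where r: "strict_mono r" and D: "(\<lambda>j. (1 / k (r j)) *\<^sub>R Y (r j)) \<longlonglongrightarrow> d"
    and d: "norm d = 1" "\<forall>i. 0 \<le> d$i" "\<forall>i. 0 \<le> (M *v d)$i" "d \<bullet> (M *v d) \<le> 0"
    by (rule asymptotic_direction[OF Y(1) nY kpos k bound])
  have "eventually (\<lambda>j. Y (r j) - d \<in> ?P \<and> norm (Y (r j) - d) < norm (Y (r j))) sequentially"
    using eventually_shift_back[OF Y(1) kpos filterlim_compose[OF k filterlim_subseq[OF r]] D d(1-3)] .
  then obtain j where j: "Y (r j) - d \<in> ?P" "norm (Y (r j) - d) < norm (Y (r j))"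
    unfolding eventually_sequentially by blast
  have "?f (Y (r j) - d) \<le> ?f (Y (r j))"
    using lcp_gap_step_back[OF Y(1) d(2-4)] .
  moreover have "norm (Y (r j) - d) \<le> k (r j)" using j(2) nY[of "r j"] by simp
  ultimately have "norm (Y (r j)) \<le> norm (Y (r j) - d)"
    using Ynorm[of "r j"] j(1) by blast
  then show False using j(2) by simp
qed

section \<open>Local minimisers are solutions when \<open>M\<close> is row sufficient\<close>

lemma eventually_at_right_affine_nonneg:
  fixes a c :: real
  assumes "0 \<le> a" and "a = 0 \<Longrightarrow> 0 \<le> c"
  shows "eventually (\<lambda>t. 0 \<le> a + t * c) (at_right 0)"
proof (cases "a = 0")
  case True
  then show ?thesis
    using assms(2) eventually_at_right_less[of 0] by (auto elim: eventually_mono)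
next
  case False
  then have "0 < a" using assms(1) by simp
  moreover have "((\<lambda>t. a + t * c) \<longlongrightarrow> a + 0 * c) (at_right 0)"
    by (intro tendsto_intros)
  ultimately have "eventually (\<lambda>t. 0 < a + t * c) (at_right 0)"
    by (auto dest: order_tendstoD)
  then show ?thesis by (auto elim: eventually_mono)
qed

lemma eventually_feasible_direction:
  assumes "x \<in> lcp_feasible M q" and "\<forall>i. x$i = 0 \<longrightarrow> 0 \<le> d$i"
    and "\<forall>i. (q + M *v x)$i = 0 \<longrightarrow> 0 \<le> (M *v d)$i"
  shows "eventually (\<lambda>t. x + t *\<^sub>R d \<in> lcp_feasible M q) (at_right 0)"
  unfolding lcp_feasible_line using assms unfolding lcp_feasible_def
  by (intro eventually_all_finite eventually_conj eventually_at_right_affine_nonneg) auto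

lemma local_min_first_order:
  fixes M :: "real^'n^'n"
  assumes xP: "x \<in> lcp_feasible M q" and nx: "norm x < R"
    and min: "\<forall>y\<in>lcp_feasible M q. norm y \<le> R \<longrightarrow> lcp_gap M q x \<le> lcp_gap M q y"
    and d_active: "\<forall>i. x$i = 0 \<longrightarrow> 0 \<le> d$i"
    and Md_active: "\<forall>i. (q + M *v x)$i = 0 \<longrightarrow> 0 \<le> (M *v d)$i"
  shows "0 \<le> lcp_gap_grad M q x \<bullet> d"
proof (rule ccontr)
  define g where "g = lcp_gap_grad M q x \<bullet> d"
  define c where "c = d \<bullet> (M *v d)"
  assume "\<not> 0 \<le> lcp_gap_grad M q x \<bullet> d"
  then have "g < 0" unfolding g_def by simp
  have "((\<lambda>t. norm (x + t *\<^sub>R d)) \<longlongrightarrow> norm (x + 0 *\<^sub>R d)) (at_right 0)"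
    by (intro tendsto_intros)
  then have "eventually (\<lambda>t. norm (x + t *\<^sub>R d) < R) (at_right 0)"
    using nx by (auto dest: order_tendstoD)
  moreover have "((\<lambda>t. g + t * c) \<longlongrightarrow> g + 0 * c) (at_right 0)"
    by (intro tendsto_intros)
  then have "eventually (\<lambda>t. g + t * c < 0) (at_right 0)"
    using \<open>g < 0\<close> by (auto dest: order_tendstoD)
  moreover note eventually_feasible_direction[OF xP d_active Md_active]
  moreover have "eventually (\<lambda>t::real. 0 < t) (at_right 0)"
    by (simp add: eventually_at_filter)
  ultimately have "eventually (\<lambda>t. norm (x + t *\<^sub>R d) < R \<and> g + t * c < 0
      \<and> x + t *\<^sub>R d \<in> lcp_feasible M q \<and> 0 < t) (at_right (0::real))"
    by eventually_elim auto
  then obtain t where t: "norm (x + t *\<^sub>R d) < R" "g + t * c < 0"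
      "x + t *\<^sub>R d \<in> lcp_feasible M q" "0 < t"
    using eventually_happens trivial_limit_at_right_real by blast
  have "lcp_gap M q x \<le> lcp_gap M q (x + t *\<^sub>R d)" using min t(1,3) by auto
  also have "\<dots> = lcp_gap M q x + t * (g + t * c)"
    unfolding lcp_gap_along_line g_def c_def by (simp add: power2_eq_square algebra_simps)
  finally have "0 \<le> t * (g + t * c)" by simp
  moreover have "t * (g + t * c) < 0" using t(2,4) by (rule mult_pos_neg[rotated])
  ultimately show False by simp
qed

lemma farkas_finite_cone:
  fixes g :: "'a::euclidean_space"
  assumes G: "finite G" and dual: "\<And>d. \<forall>a\<in>G. 0 \<le> a \<bullet> d \<Longrightarrow> 0 \<le> g \<bullet> d"
  shows "g \<in> convex_cone hull G"
proof (rule ccontr)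
  assume "g \<notin> convex_cone hull G"
  then obtain a b where ab: "a \<bullet> g < b" "\<forall>c\<in>convex_cone hull G. b < a \<bullet> c"
    using separating_hyperplane_closed_point[OF convex_convex_cone_hull closed_convex_cone_hull[OF G]]
    by blast
  have b0: "b < 0" using ab(2) convex_cone_hull_contains_0 by force
  have "0 \<le> c \<bullet> a" if "c \<in> G" for c
  proof (rule ccontr)
    assume ac: "\<not> 0 \<le> c \<bullet> a"
    have "(b / (a \<bullet> c)) *\<^sub>R c \<in> convex_cone hull G"
      using convex_cone_hull_mul[OF hull_inc[OF that]] b0 ac
      by (simp add: divide_nonpos_neg inner_commute)
    then have "b < a \<bullet> ((b / (a \<bullet> c)) *\<^sub>R c)" using ab(2) by blast
    then show False using ac by (simp add: inner_commute)
  qed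
  then have "0 \<le> g \<bullet> a" by (intro dual) blast
  then show False using ab(1) b0 by (simp add: inner_commute)
qed

definition axes_columns_cone :: "'n set \<Rightarrow> real^'m^'n \<Rightarrow> 'm set \<Rightarrow> (real^'n) set" where
  "axes_columns_cone I B J = {v + B *v u | u v. (\<forall>j. 0 \<le> u$j \<and> (j \<notin> J \<longrightarrow> u$j = 0))
                                                \<and> (\<forall>i. 0 \<le> v$i \<and> (i \<notin> I \<longrightarrow> v$i = 0))}"

lemma convex_cone_axes_columns_cone: "convex_cone (axes_columns_cone I B J)"
  unfolding convex_cone_iff
proof (intro conjI ballI allI impI)
  show "0 \<in> axes_columns_cone I B J"
    unfolding axes_columns_cone_def by (intro CollectI exI[of _ 0]) simp
  fix y z assume "y \<in> axes_columns_cone I B J" "z \<in> axes_columns_cone I B J"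
  then obtain u1 v1 u2 v2 where "y = v1 + B *v u1" "z = v2 + B *v u2"
    "\<forall>j. 0 \<le> u1$j \<and> (j \<notin> J \<longrightarrow> u1$j = 0)" "\<forall>i. 0 \<le> v1$i \<and> (i \<notin> I \<longrightarrow> v1$i = 0)"
    "\<forall>j. 0 \<le> u2$j \<and> (j \<notin> J \<longrightarrow> u2$j = 0)" "\<forall>i. 0 \<le> v2$i \<and> (i \<notin> I \<longrightarrow> v2$i = 0)"
    unfolding axes_columns_cone_def by blast
  then show "y + z \<in> axes_columns_cone I B J" unfolding axes_columns_cone_def
    by (intro CollectI exI[of _ "u1 + u2"] exI[of _ "v1 + v2"]) (simp add: matrix_vector_right_distrib)
next
  fix y and c :: real assume "y \<in> axes_columns_cone I B J" "0 \<le> c"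
  then obtain u v where "y = v + B *v u"
    "\<forall>j. 0 \<le> u$j \<and> (j \<notin> J \<longrightarrow> u$j = 0)" "\<forall>i. 0 \<le> v$i \<and> (i \<notin> I \<longrightarrow> v$i = 0)"
    unfolding axes_columns_cone_def by blast
  then show "c *\<^sub>R y \<in> axes_columns_cone I B J" using \<open>0 \<le> c\<close> unfolding axes_columns_cone_def
    by (intro CollectI exI[of _ "c *\<^sub>R u"] exI[of _ "c *\<^sub>R v"])
       (simp add: matrix_vector_mult_scaleR scaleR_add_right)
qed

lemma sum_in_convex_cone_hull:
  assumes "finite A" "\<forall>i\<in>A. h i \<in> convex_cone hull S"
  shows "sum h A \<in> convex_cone hull S"
  using assms
  by (induction A rule: finite_induct) (auto intro: convex_cone_hull_contains_0 convex_cone_hull_add)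

lemma axes_columns_cone_subset_hull:
  fixes B :: "real^'m^'n"
  shows "axes_columns_cone I B J \<subseteq> convex_cone hull ((\<lambda>i. axis i 1) ` I \<union> (\<lambda>j. B *v axis j 1) ` J)"
    (is "_ \<subseteq> convex_cone hull ?G")
proof
  fix y assume "y \<in> axes_columns_cone I B J"
  then obtain u v where y: "y = v + B *v u"
    and u: "\<forall>j. 0 \<le> u$j \<and> (j \<notin> J \<longrightarrow> u$j = 0)" and v: "\<forall>i. 0 \<le> v$i \<and> (i \<notin> I \<longrightarrow> v$i = 0)"
    unfolding axes_columns_cone_def by blast
  have v_sum: "v = (\<Sum>i\<in>UNIV. v$i *\<^sub>R axis i 1)" and u_sum: "u = (\<Sum>j\<in>UNIV. u$j *\<^sub>R axis j 1)"
    using basis_expansion[of v] basis_expansion[of u] by (simp_all add: scalar_mult_eq_scaleR)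
  have Bu_sum: "B *v u = (\<Sum>j\<in>UNIV. u$j *\<^sub>R (B *v axis j 1))"
    by (subst u_sum) (simp add: linear_sum[OF matrix_vector_mul_linear] matrix_vector_mult_scaleR comp_def)
  have "v$i *\<^sub>R axis i 1 \<in> convex_cone hull ?G" for i
    using v convex_cone_hull_contains_0 by (cases "i \<in> I") (auto intro: convex_cone_hull_mul hull_inc)
  then have "v \<in> convex_cone hull ?G"
    by (subst v_sum) (intro sum_in_convex_cone_hull ballI finite)
  moreover have "u$j *\<^sub>R (B *v axis j 1) \<in> convex_cone hull ?G" for j
    using u convex_cone_hull_contains_0 by (cases "j \<in> J") (auto intro: convex_cone_hull_mul hull_inc)
  then have "B *v u \<in> convex_cone hull ?G"
    unfolding Bu_sum by (intro sum_in_convex_cone_hull ballI finite)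
  ultimately show "y \<in> convex_cone hull ?G" unfolding y by (rule convex_cone_hull_add)
qed

lemma convex_cone_hull_axes_columns:
  fixes B :: "real^'m^'n"
  shows "convex_cone hull ((\<lambda>i. axis i 1) ` I \<union> (\<lambda>j. B *v axis j 1) ` J) = axes_columns_cone I B J"
proof
  have "axis i 1 \<in> axes_columns_cone I B J" if "i \<in> I" for i
    using that unfolding axes_columns_cone_def
    by (intro CollectI exI[of _ 0] exI[of _ "axis i 1"]) (auto simp: axis_def)
  moreover have "B *v axis j 1 \<in> axes_columns_cone I B J" if "j \<in> J" for j
    using that unfolding axes_columns_cone_def
    by (intro CollectI exI[of _ "axis j 1"] exI[of _ 0]) (auto simp: axis_def)
  ultimately show "convex_cone hull ((\<lambda>i. axis i 1) ` I \<union> (\<lambda>j. B *v axis j 1) ` J)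
      \<subseteq> axes_columns_cone I B J"
    by (intro hull_minimal convex_cone_axes_columns_cone) auto
qed (rule axes_columns_cone_subset_hull)

text \<open>The KKT argument: by the first-order condition and Farkas' lemma the gradient is
  \<open>v + M\<^sup>T u\<close> with \<open>v, u \<ge> 0\<close> supported on the active constraints; then \<open>y = x - u\<close>
  satisfies \<open>y\<^sub>i (M\<^sup>T y)\<^sub>i = - x\<^sub>i w\<^sub>i - u\<^sub>i v\<^sub>i \<le> 0\<close> with \<open>w = q + M x\<close>, and row
  sufficiency forces \<open>x\<^sub>i w\<^sub>i = 0\<close>.\<close>
lemma row_sufficient_local_min_complementary:
  fixes M :: "real^'n^'n"
  assumes rs: "row_sufficient M" and xP: "x \<in> lcp_feasible M q" and nx: "norm x < R"
    and min: "\<forall>y\<in>lcp_feasible M q. norm y \<le> R \<longrightarrow> lcp_gap M q x \<le> lcp_gap M q y"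
  shows "x$i * (q + M *v x)$i = 0"
proof -
  define w where "w = q + M *v x"
  have x0: "0 \<le> x$i" and w0: "0 \<le> w$i" for i
    using xP unfolding lcp_feasible_def w_def by auto
  let ?G = "(\<lambda>i. axis i 1) ` {i. x$i = 0} \<union> (\<lambda>j. transpose M *v axis j 1) ` {j. w$j = 0}"
  have "lcp_gap_grad M q x \<in> convex_cone hull ?G"
  proof (rule farkas_finite_cone)
    fix d assume dual: "\<forall>a\<in>?G. 0 \<le> a \<bullet> d"
    show "0 \<le> lcp_gap_grad M q x \<bullet> d"
    proof (rule local_min_first_order[OF xP nx min])
      show "\<forall>i. x$i = 0 \<longrightarrow> 0 \<le> d$i"
        using dual by (auto simp: cart_eq_inner_axis inner_commute)
      show "\<forall>j. (q + M *v x)$j = 0 \<longrightarrow> 0 \<le> (M *v d)$j"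
      proof (intro allI impI)
        fix j assume "(q + M *v x)$j = 0"
        then have "0 \<le> (transpose M *v axis j 1) \<bullet> d" using dual unfolding w_def by auto
        then show "0 \<le> (M *v d)$j"
          by (metis inner_matrix_vector_transpose cart_eq_inner_axis inner_commute)
      qed
    qed
  qed simp
  then obtain u v where uv: "lcp_gap_grad M q x = v + transpose M *v u"
    and u: "\<forall>j. 0 \<le> u$j \<and> (j \<notin> {j. w$j = 0} \<longrightarrow> u$j = 0)"
    and v: "\<forall>i. 0 \<le> v$i \<and> (i \<notin> {i. x$i = 0} \<longrightarrow> v$i = 0)"
    unfolding convex_cone_hull_axes_columns axes_columns_cone_def by blast
  define y where "y = x - u"
  have My: "transpose M *v y = v - w"
    using uv unfolding y_def lcp_gap_grad_def w_def
    by (simp add: matrix_vector_mult_diff_distrib algebra_simps)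
  have prod: "y$j * (transpose M *v y)$j = - (x$j * w$j) - u$j * v$j" for j
  proof -
    have "x$j * v$j = 0" "u$j * w$j = 0" using u v by auto
    moreover have "y$j * (transpose M *v y)$j = (x$j - u$j) * (v$j - w$j)"
      unfolding My by (simp add: y_def)
    moreover have "(x$j - u$j) * (v$j - w$j) = x$j * v$j - x$j * w$j - u$j * v$j + u$j * w$j"
      by (simp add: algebra_simps)
    ultimately show ?thesis by linarith
  qed
  have nn: "0 \<le> x$j * w$j" "0 \<le> u$j * v$j" for j using x0 w0 u v by auto
  have "\<forall>j. y$j * (transpose M *v y)$j \<le> 0"
  proof
    fix j show "y$j * (transpose M *v y)$j \<le> 0" unfolding prod using nn[of j] by linarith
  qed
  then have "y$i * (transpose M *v y)$i = 0"
    using rs unfolding row_sufficient_def column_sufficient_def by blast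
  then show ?thesis using nn[of i] unfolding prod w_def by linarith
qed

text \<open>For row sufficient \<open>M\<close>, every feasible LCP is solvable, so the complementary range is
  the feasibility cone.\<close>
lemma compl_range_row_sufficient:
  fixes M :: "real^'n^'n"
  assumes rs: "row_sufficient M"
  shows "compl_range M = {w - M *v z | w z. (\<forall>i. 0 \<le> w$i) \<and> (\<forall>i. 0 \<le> z$i)}"
proof
  show "compl_range M \<subseteq> {w - M *v z | w z. (\<forall>i. 0 \<le> w$i) \<and> (\<forall>i. 0 \<le> z$i)}"
    unfolding compl_range_def by blast
next
  show "{w - M *v z | w z. (\<forall>i. 0 \<le> w$i) \<and> (\<forall>i. 0 \<le> z$i)} \<subseteq> compl_range M"
  proof
    fix p assume "p \<in> {w - M *v z | w z. (\<forall>i. 0 \<le> w$i) \<and> (\<forall>i. 0 \<le> z$i)}"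
    then obtain w0 z0 where "p = w0 - M *v z0" "\<forall>i. 0 \<le> w0$i" "\<forall>i. 0 \<le> z0$i" by blast
    then have "z0 \<in> lcp_feasible M p" unfolding lcp_feasible_def by simp
    then obtain R x where x: "x \<in> lcp_feasible M p" "norm x < R"
      "\<forall>y\<in>lcp_feasible M p. norm y \<le> R \<longrightarrow> lcp_gap M p x \<le> lcp_gap M p y"
      by (rule lcp_gap_interior_local_min)
    have compl: "x$i * (p + M *v x)$i = 0" for i
      by (rule row_sufficient_local_min_complementary[OF rs x])
    show "p \<in> compl_range M" unfolding compl_range_def
    proof (intro CollectI exI conjI)
      show "(p + M *v x) - M *v x = p" by simp
      show "\<forall>i. 0 \<le> (p + M *v x)$i" "\<forall>i. 0 \<le> x$i" using x(1) unfolding lcp_feasible_def by auto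
      show "(p + M *v x) \<bullet> x = 0"
        unfolding inner_vec_def using compl by (auto simp: mult.commute intro!: sum.neutral)
    qed
  qed
qed

text \<open>The feasibility cone is generated by the unit vectors and the columns of \<open>-M\<close>.\<close>
lemma polyhedron_lcp_feasibility_cone:
  fixes M :: "real^'n^'n"
  shows "polyhedron {w - M *v z | w z. (\<forall>i. 0 \<le> w$i) \<and> (\<forall>i. 0 \<le> z$i)}"
proof -
  have neg: "(- M) *v z = - (M *v z)" for z
    by (simp add: matrix_vector_mult_def vec_eq_iff sum_negf)
  have "axes_columns_cone UNIV (- M) UNIV
      = {w - M *v z | w z. (\<forall>i. 0 \<le> w$i) \<and> (\<forall>i. 0 \<le> z$i)}"
  proof (intro equalityI subsetI)
    fix y assume "y \<in> axes_columns_cone UNIV (- M) UNIV"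
    then obtain u v where "y = v - M *v u" "\<forall>j. 0 \<le> u$j" "\<forall>i. 0 \<le> v$i"
      unfolding axes_columns_cone_def neg by auto
    then show "y \<in> {w - M *v z | w z. (\<forall>i. 0 \<le> w$i) \<and> (\<forall>i. 0 \<le> z$i)}" by blast
  next
    fix y assume "y \<in> {w - M *v z | w z. (\<forall>i. 0 \<le> w$i) \<and> (\<forall>i. 0 \<le> z$i)}"
    then obtain w z where "y = w + (- M) *v z" "\<forall>i. 0 \<le> w$i" "\<forall>i. 0 \<le> z$i"
      unfolding neg by auto
    then show "y \<in> axes_columns_cone UNIV (- M) UNIV" unfolding axes_columns_cone_def by blast
  qed
  then show ?thesis
    using polyhedron_convex_cone_hull[of "range (\<lambda>i. axis i 1) \<union> range (\<lambda>j. (- M) *v axis j 1)"]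
    unfolding convex_cone_hull_axes_columns by simp
qed

lemma affine_matrix_range:
  fixes Q :: "real^'d^'n"
  shows "affine {q + Q *v \<theta> | \<theta>. True}"
proof -
  have "{q + Q *v \<theta> | \<theta>. True} = (+) q ` range ((*v) Q)" by auto
  moreover have "subspace (range ((*v) Q))"
    by (intro linear_subspace_image matrix_vector_mul_linear subspace_UNIV)
  ultimately show ?thesis using affine_translation subspace_imp_affine by metis
qed

theorem mainTheorem6:
  fixes M :: "real^'n^'n" and Q :: "real^'d^'n" and q :: "real^'n"
  assumes "sufficient M"
  shows "convex ({q + Q *v \<theta> | \<theta>. True} \<inter> compl_range M)
       \<and> polyhedron ({q + Q *v \<theta> | \<theta>. True} \<inter> compl_range M)"
proof -
  have "row_sufficient M" using assms unfolding sufficient_def by simp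
  have "polyhedron (compl_range M)"
    unfolding compl_range_row_sufficient[OF \<open>row_sufficient M\<close>]
    by (rule polyhedron_lcp_feasibility_cone)
  then have "polyhedron ({q + Q *v \<theta> | \<theta>. True} \<inter> compl_range M)"
    using affine_imp_polyhedron[OF affine_matrix_range] by (rule polyhedron_Int[rotated])
  then show ?thesis using polyhedron_imp_convex by blast
qed

end
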